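(* Let $0<q<1$, and for each integer $k\ge1$ let $a=a(k)>0$ (a positive, bounded function of $k$). Define \[u_n=\frac{(k+ak^{-1})^n}{n!}\,q^{-n(2k-n-1)/2}\ (n\ge0),\qquad v_j=u_{2k-j-1}-u_j\ (0\le j\le k-1).\] Then for every integer $k\ge1$, $v_j>0$ for all $0\le j\le k-1$. Furthermore, if $a=a_0+O(k^{-1})$ as $k\to\infty$ for some constant $a_0>0$, then there exists a positive integer $N(q)$ such that for every $N\ge N(q)$ and every $k\ge q^{-3N}$, one has $v_j<v_{j+1}$ for all $0\le j\le k-N$. *)

theory Defs
  imports Complex_Main "HOL-Library.Landau_Symbols"
begin

definition useq :: "real \<Rightarrow> (nat \<Rightarrow> real) \<Rightarrow> nat \<Rightarrow> nat \<Rightarrow> real" where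
  "useq q a k n = (real k + a k / real k) ^ n / fact n
      * q powr (- (real n * (2 * real k - real n - 1) / 2))"

definition vseq :: "real \<Rightarrow> (nat \<Rightarrow> real) \<Rightarrow> nat \<Rightarrow> nat \<Rightarrow> real" where
  "vseq q a k j = useq q a k (2 * k - j - 1) - useq q a k j"

end

theory Submission
  imports Defs
begin

text \<open>
  Put x = k + a/k and w(n) = q^(-n(2k-n-1)/2), so that u(n) = w(n) x^n/n!. The weight
  is invariant under n \<mapsto> 2k-1-n, hence v(j) = w(j) (x^m/m! - x^j/j!) with m = 2k-1-j.
  Since (j+1) m \<le> k^2 < x^2, moving the pair (j, m) outwards increases the ratio of the two
  exponential terms, which gives v(j) > 0. For monotonicity, w(j+1)/w(j) = q^(-(k-j-1)) is
  huge when j is far from k, whereas the gap of the exponential terms shrinks by a factor of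
  at most 5x/m \<le> 5(1+B) from j to j+1; the constant 5 bounds (k-j-1)^2/(k-j-2)^2 once
  j + 3 \<le> k.
\<close>

definition exp_term :: "real \<Rightarrow> nat \<Rightarrow> real" where
  "exp_term x n = x ^ n / fact n"

definition exp_gap :: "real \<Rightarrow> nat \<Rightarrow> nat \<Rightarrow> real" where
  "exp_gap x k j = exp_term x (2 * k - 1 - j) - exp_term x j"

definition qweight :: "real \<Rightarrow> nat \<Rightarrow> nat \<Rightarrow> real" where
  "qweight q k n = q powr (- (real n * (2 * real k - real n - 1) / 2))"

lemma exp_term_Suc: "exp_term x (Suc n) = exp_term x n * x / real (Suc n)"
  unfolding exp_term_def by (simp add: field_simps)

lemma exp_term_pos: "0 < x \<Longrightarrow> 0 < exp_term x n"
  unfolding exp_term_def by simp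

lemma exp_term_less_reflect:
  assumes x: "real k < x" and "i < k"
  shows "exp_term x i < exp_term x (2 * k - 1 - i)"
  using \<open>i < k\<close>
proof (induction i rule: strict_inc_induct)
  case (base i)
  then have "exp_term x (2 * k - 1 - i) = exp_term x i * (x / real k)"
    by (simp add: exp_term_Suc)
  moreover have "exp_term x i * 1 < exp_term x i * (x / real k)"
    using x base by (intro mult_strict_left_mono) (simp_all add: exp_term_pos)
  ultimately show ?case by simp
next
  case (step i)
  define m where "m = 2 * k - 1 - i"
  have x0: "0 < x" using x step by simp
  have m: "m = Suc (2 * k - 1 - Suc i)" using step unfolding m_def by simp
  have "real (Suc i) * real m \<le> (real k)\<^sup>2"
  proof -
    have "real (Suc i) * real m = (real k)\<^sup>2 - (real k - real i - 1)\<^sup>2"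
      using step unfolding m_def by (simp add: of_nat_diff power2_eq_square algebra_simps)
    then show ?thesis by simp
  qed
  also have "\<dots> \<le> x\<^sup>2" using x by (simp add: power_mono)
  finally have prod: "real (Suc i) / x \<le> x / real m"
    using x0 m by (simp add: field_simps power2_eq_square)
  have "exp_term x i = exp_term x (Suc i) * (real (Suc i) / x)"
    using x0 by (simp add: exp_term_Suc)
  also have "\<dots> < exp_term x (2 * k - 1 - Suc i) * (real (Suc i) / x)"
    using step.IH x0 by (intro mult_strict_right_mono) simp_all
  also have "\<dots> \<le> exp_term x (2 * k - 1 - Suc i) * (x / real m)"
    using prod x0 by (intro mult_left_mono) (simp_all add: exp_term_pos less_imp_le)
  also have "\<dots> = exp_term x m"
    by (subst (2) m) (simp add: exp_term_Suc m)
  finally show ?case unfolding m_def .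
qed

lemma exp_gap_pos: "real k < x \<Longrightarrow> j < k \<Longrightarrow> 0 < exp_gap x k j"
  unfolding exp_gap_def using exp_term_less_reflect by simp

text \<open>
  Used with P = x^m/m!, Q = x^j/j!, y = x^2, R = m(j+1) and R' = (m-1)(j+2), where the
  first hypothesis is the inequality x^(j+2)/(j+2)! < x^(m-2)/(m-2)!.
\<close>
lemma diff_le_five_times_diff:
  fixes P Q y R R' :: real
  assumes bound: "Q * y\<^sup>2 \<le> P * R * R'" and "R' < y" "0 < R" "R \<le> R'"
    and four: "y - R \<le> 4 * (y - R')" and "0 < P" "0 \<le> Q"
  shows "P - Q \<le> 5 * (P - Q * y / R)"
proof -
  have y0: "0 < y" using assms by linarith
  have QP: "Q * y / R \<le> P * R' / y"
    using bound y0 \<open>0 < R\<close> by (simp add: field_simps power2_eq_square)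
  also have "\<dots> \<le> P" using assms y0 by (simp add: field_simps)
  finally have "Q * y / R \<le> P" .
  have "P - Q = (P - Q * y / R) + (Q * y / R) * (1 - R / y)"
    using y0 \<open>0 < R\<close> by (simp add: field_simps)
  also have "\<dots> \<le> (P - Q * y / R) + P * (1 - R / y)"
    using \<open>Q * y / R \<le> P\<close> assms y0 by (intro add_left_mono mult_right_mono) simp_all
  also have "P * (1 - R / y) = P * (y - R) / y" using y0 by (simp add: field_simps)
  also have "\<dots> \<le> P * (4 * (y - R')) / y"
    using four \<open>0 < P\<close> y0 by (simp add: divide_right_mono)
  also have "\<dots> = 4 * (P - P * R' / y)" using y0 by (simp add: field_simps)
  also have "\<dots> \<le> 4 * (P - Q * y / R)" using QP by simp
  finally show ?thesis by simp
qed

lemma exp_gap_le_five_times_Suc: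
  assumes x: "real k < x" and j: "j + 3 \<le> k"
  shows "exp_gap x k j \<le> 5 * (x / real (2 * k - 1 - j)) * exp_gap x k (Suc j)"
proof -
  define n where "n = 2 * k - 1 - Suc (Suc j)"
  define P where "P = exp_term x (Suc (Suc n))"
  define Q where "Q = exp_term x j"
  define t where "t = real k - real j - 1"
  define R where "R = real (Suc (Suc n)) * real (Suc j)"
  define R' where "R' = real (Suc n) * real (Suc (Suc j))"
  have x0: "0 < x" using x j by simp
  have idx: "2 * k - 1 - j = Suc (Suc n)" "2 * k - 1 - Suc j = Suc n"
    using j unfolding n_def by simp_all
  have nt: "real n = real k + t - 2" using j unfolding n_def t_def by (simp add: of_nat_diff)
  have t1: "1 \<le> t - 1" using j unfolding t_def by simp
  have Pn1: "exp_term x (Suc n) = P * real (Suc (Suc n)) / x"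
    using x0 unfolding P_def exp_term_Suc[of x "Suc n"] by simp
  have Pn: "exp_term x n = P * real (Suc (Suc n)) * real (Suc n) / x\<^sup>2"
    using Pn1 x0 unfolding exp_term_Suc[of x n] by (simp add: field_simps power2_eq_square)
  have Qj1: "exp_term x (Suc j) = Q * x / real (Suc j)"
    unfolding Q_def by (simp add: exp_term_Suc)
  have Qj2: "exp_term x (Suc (Suc j)) = Q * x\<^sup>2 / (real (Suc j) * real (Suc (Suc j)))"
    unfolding Qj1 exp_term_Suc[of x "Suc j"] by (simp add: power2_eq_square)
  have "exp_term x (Suc (Suc j)) < exp_term x n"
    using exp_term_less_reflect[OF x, of "Suc (Suc j)"] j unfolding n_def by simp
  then have bound: "Q * (x\<^sup>2)\<^sup>2 \<le> P * R * R'"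
    unfolding Pn Qj2 R_def R'_def using x0
    by (simp add: divide_less_eq less_divide_eq power2_eq_square mult_ac less_imp_le)
  have R: "R = (real k)\<^sup>2 - t\<^sup>2" and R': "R' = (real k)\<^sup>2 - (t - 1)\<^sup>2"
    unfolding R_def R'_def of_nat_Suc nt t_def by (simp_all add: algebra_simps power2_eq_square)
  have k2: "(real k)\<^sup>2 < x\<^sup>2" using x by (simp add: power_strict_mono)
  have "P - Q \<le> 5 * (P - Q * x\<^sup>2 / R)"
  proof (rule diff_le_five_times_diff[OF bound])
    have "0 \<le> (t - 1)\<^sup>2" "0 \<le> (3 * t - 2) * (t - 2)" using t1 by simp_all
    then show "R' < x\<^sup>2" "R \<le> R'" "x\<^sup>2 - R \<le> 4 * (x\<^sup>2 - R')"
      using k2 t1 unfolding R R' by (simp_all add: power2_eq_square algebra_simps)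
    show "0 < R" unfolding R_def by simp
    show "0 < P" "0 \<le> Q" unfolding P_def Q_def using x0 by (simp_all add: exp_term_pos less_imp_le)
  qed
  also have "P - Q * x\<^sup>2 / R = (x / real (Suc (Suc n))) * exp_gap x k (Suc j)"
    unfolding exp_gap_def idx Pn1 Qj1 R_def using x0
    by (simp add: field_simps power2_eq_square del: of_nat_Suc)
  finally show ?thesis unfolding exp_gap_def idx P_def Q_def by (simp add: mult.assoc)
qed

lemma qweight_pos: "0 < q \<Longrightarrow> 0 < qweight q k n"
  unfolding qweight_def by simp

lemma qweight_reflect:
  assumes "n < 2 * k"
  shows "qweight q k (2 * k - 1 - n) = qweight q k n"
proof -
  have "real (2 * k - 1 - n) = 2 * real k - real n - 1" using assms by (simp add: of_nat_diff)
  then show ?thesis unfolding qweight_def by (simp add: algebra_simps)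
qed

lemma qweight_Suc:
  assumes "0 < q" "j < k"
  shows "qweight q k (Suc j) = qweight q k j * (1 / q) ^ (k - Suc j)"
proof -
  have exponent: "- (real (Suc j) * (2 * real k - real (Suc j) - 1) / 2)
      = - (real j * (2 * real k - real j - 1) / 2) + - real (k - Suc j)"
    using assms by (simp add: of_nat_diff field_simps)
  have "q powr (- real n) = (1 / q) ^ n" for n
    using assms by (simp add: powr_minus powr_realpow power_one_over inverse_eq_divide)
  then show ?thesis unfolding qweight_def exponent powr_add by simp
qed

lemma vseq_eq:
  assumes "j < 2 * k"
  shows "vseq q a k j = exp_gap (real k + a k / real k) k j * qweight q k j"
  unfolding vseq_def useq_def exp_gap_def exp_term_def
  using qweight_reflect[OF assms] by (simp add: qweight_def left_diff_distrib)

lemma vseq_pos: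
  assumes "0 < q" "0 < a k" "j < k"
  shows "0 < vseq q a k j"
proof -
  have "real k < real k + a k / real k" using assms by simp
  then show ?thesis
    using assms by (simp add: vseq_eq exp_gap_pos qweight_pos)
qed

lemma vseq_less_vseq_Suc:
  assumes q: "0 < q" and a: "0 < a k" "a k \<le> B" and j: "j + 3 \<le> k"
    and Z: "5 * (1 + B) < (1 / q) ^ (k - Suc j)"
  shows "vseq q a k j < vseq q a k (Suc j)"
proof -
  define x where "x = real k + a k / real k"
  define m where "m = 2 * k - 1 - j"
  have k1: "1 \<le> k" using j by simp
  have xk: "real k < x" using a k1 unfolding x_def by simp
  have "a k / real k \<le> a k" using a k1 by (simp add: divide_le_eq)
  then have "x \<le> real k + B" using a unfolding x_def by linarith
  also have "\<dots> \<le> real m + B * real m"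
    using a j unfolding m_def by (intro add_mono) (simp_all add: of_nat_diff)
  also have "\<dots> = (1 + B) * real m" by (simp add: algebra_simps)
  finally have "x / real m \<le> 1 + B" using j unfolding m_def by (simp add: divide_le_eq)
  then have "5 * (x / real m) \<le> 5 * (1 + B)" by simp
  also have "\<dots> < (1 / q) ^ (k - Suc j)" by (rule Z)
  finally have ratio: "5 * (x / real m) < (1 / q) ^ (k - Suc j)" .
  have gap: "0 < exp_gap x k (Suc j)" using xk j by (simp add: exp_gap_pos)
  have "vseq q a k j = exp_gap x k j * qweight q k j"
    using j unfolding x_def by (simp add: vseq_eq)
  also have "\<dots> \<le> 5 * (x / real m) * exp_gap x k (Suc j) * qweight q k j"
    using exp_gap_le_five_times_Suc[OF xk j] q unfolding m_def
    by (intro mult_right_mono) (simp_all add: qweight_pos less_imp_le)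
  also have "\<dots> < (1 / q) ^ (k - Suc j) * exp_gap x k (Suc j) * qweight q k j"
    using ratio gap q by (intro mult_strict_right_mono) (simp_all add: qweight_pos)
  also have "\<dots> = vseq q a k (Suc j)"
    using j q unfolding x_def by (simp add: vseq_eq qweight_Suc)
  finally show ?thesis .
qed

theorem lemma2p1:
  fixes q :: real and a :: "nat \<Rightarrow> real"
  assumes "0 < q" and "q < 1"
    and "\<And>k. k \<ge> 1 \<Longrightarrow> a k > 0"
    and "\<exists>B. \<forall>k\<ge>1. a k \<le> B"
  shows "(\<forall>k\<ge>1. \<forall>j. j \<le> k - 1 \<longrightarrow> vseq q a k j > 0)
     \<and> ((\<exists>a0>0. (\<lambda>k. a k - a0) \<in> O(\<lambda>k. 1 / real k)) \<longrightarrow>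
         (\<exists>N0::nat. N0 > 0 \<and> (\<forall>N\<ge>N0. \<forall>k::nat. real k \<ge> q powr (- 3 * real N) \<longrightarrow>
             (\<forall>j. j + N \<le> k \<longrightarrow> vseq q a k j < vseq q a k (j + 1)))))"
proof (intro conjI impI)
  show "\<forall>k\<ge>1. \<forall>j. j \<le> k - 1 \<longrightarrow> vseq q a k j > 0"
    using assms(1,3) by (auto intro: vseq_pos)
  obtain B where B: "\<And>k. k \<ge> 1 \<Longrightarrow> a k \<le> B" using assms(4) by blast
  obtain n where n: "5 * (1 + B) < (1 / q) ^ n"
    using real_arch_pow[of "1 / q" "5 * (1 + B)"] assms(1,2) by auto
  have "vseq q a k j < vseq q a k (Suc j)" if "n + 3 \<le> N" "j + N \<le> k" for N k j
  proof (rule vseq_less_vseq_Suc[OF assms(1) assms(3) B])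
    have "(1 / q) ^ n \<le> (1 / q) ^ (k - Suc j)"
      using that assms(1,2) by (intro power_increasing) simp_all
    then show "5 * (1 + B) < (1 / q) ^ (k - Suc j)" using n by linarith
  qed (use that in simp_all)
  then show "\<exists>N0::nat. N0 > 0 \<and> (\<forall>N\<ge>N0. \<forall>k::nat. real k \<ge> q powr (- 3 * real N) \<longrightarrow>
      (\<forall>j. j + N \<le> k \<longrightarrow> vseq q a k j < vseq q a k (j + 1)))"
    by (intro exI[of _ "n + 3"]) simp
qed

end
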